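(* Let $F$ be a finitely generated group whose commutator subgroup has infinite index in $F$, and let $G$ be an arbitrary group. Then the number of surjective homomorphisms $F\to G$ is divisible by the order $|G'|$ of the commutator subgroup of $G$.
   Context: Groups need not be finite; divisibility is understood in the sense of cardinal arithmetic: an infinite cardinal is divisible by every nonzero cardinal not exceeding it. *)

theory Defs
  imports "HOL-Algebra.Algebra" "HOL-Library.Equipollence"
begin

text \<open>The witness C may be taken of the
  element type of A (if A is infinite, take C a subset of A).\<close>
definition card_dvd :: "'b set \<Rightarrow> 'a set \<Rightarrow> bool" where
  "card_dvd B A \<longleftrightarrow> (\<exists>C :: 'a set. A \<approx> B \<times> C)"

text \<open>Surjective homomorphisms F \<rightarrow> G, as functions on the carrier of F
  (extensional, so that each homomorphism is counted exactly once).\<close>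
definition surj_homs :: "('a, 'c) monoid_scheme \<Rightarrow> ('b, 'd) monoid_scheme \<Rightarrow> ('a \<Rightarrow> 'b) set" where
  "surj_homs F G = epi F G \<inter> extensional (carrier F)"

definition finitely_generated_group :: "('a, 'c) monoid_scheme \<Rightarrow> bool" where
  "finitely_generated_group F \<longleftrightarrow>
     (\<exists>S. finite S \<and> S \<subseteq> carrier F \<and> generate F S = carrier F)"

end

theory Submission
  imports Defs
begin

text \<open>
  Since \<open>F/F'\<close> is an infinite finitely generated abelian group, there is a homomorphism
  \<open>\<chi>\<close> from \<open>F\<close> onto \<open>\<int>\<close>; fix \<open>t\<close> with \<open>\<chi> t = 1\<close> and let \<open>K\<close> be the kernel, so that every
  element of \<open>F\<close> is \<open>k t\<^sup>n\<close> with \<open>k \<in> K\<close>. For a surjection \<open>\<phi> : F \<rightarrow> G\<close> put \<open>H = \<phi>(K)\<close>; it is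
  normal, and \<open>G/H\<close> is cyclic, so \<open>G' \<subseteq> H\<close>. For \<open>r \<in> H\<close> and \<open>c\<close> in the centre \<open>Z\<close> of \<open>H\<close>
  there is a unique homomorphism agreeing with \<open>r \<phi> r\<^sup>-\<^sup>1\<close> on \<open>K\<close> and sending \<open>t\<close> to
  \<open>r \<phi>(t) c r\<^sup>-\<^sup>1\<close>; it is again surjective. These twists partition the surjections into
  classes, each in bijection with \<open>(H/Z) \<times> Z\<close>, hence equipotent to \<open>H \<approx> G' \<times> (H/G')\<close>.
\<close>

section \<open>Homomorphisms onto the integers\<close>

lemma hom_integer_group_iff:
  "f \<in> hom (G\<lparr>carrier := B\<rparr>) integer_group \<longleftrightarrow> (\<forall>x\<in>B. \<forall>y\<in>B. f (x \<otimes>\<^bsub>G\<^esub> y) = f x + f y)"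
  by (simp add: hom_def)

context group begin

lemma mult_inv_cancel_left [simp]:
  "x \<in> carrier G \<Longrightarrow> y \<in> carrier G \<Longrightarrow> x \<otimes> (inv x \<otimes> y) = y"
  by (simp add: m_assoc[symmetric])

lemma inv_mult_cancel_left [simp]:
  "x \<in> carrier G \<Longrightarrow> y \<in> carrier G \<Longrightarrow> inv x \<otimes> (x \<otimes> y) = y"
  by (simp add: m_assoc[symmetric])

lemma int_character_inv_pow:
  assumes B: "subgroup B G" and f: "f \<in> hom (G\<lparr>carrier := B\<rparr>) integer_group" and x: "x \<in> B"
  shows "f (inv x) = - f x" and "f (x [^] (n::int)) = n * f x"
proof -
  interpret f: group_hom "G\<lparr>carrier := B\<rparr>" integer_group f
    using f by (simp add: group_hom_def group_hom_axioms_def subgroup_imp_group[OF B])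
  show "f (inv x) = - f x"
    using f.hom_inv[of x] x m_inv_consistent[OF B x] by simp
  show "f (x [^] n) = n * f x"
    using f.hom_int_pow[of x n] x int_pow_consistent[OF B x] by simp
qed

lemma mult_int_pow_eq_imp:
  assumes "a \<in> carrier G" "b \<in> carrier G" "b' \<in> carrier G"
    and "b \<otimes> a [^] (k::int) = b' \<otimes> a [^] (k'::int)"
  shows "inv b' \<otimes> b = a [^] (k' - k)"
proof -
  have "inv b' \<otimes> (b \<otimes> a [^] k) \<otimes> inv (a [^] k) = inv b' \<otimes> (b' \<otimes> a [^] k') \<otimes> inv (a [^] k)"
    using assms(4) by simp
  then show ?thesis using assms(1-3) by (simp add: m_assoc int_pow_diff)
qed

lemma int_pow_in_subgroup_eq_0:
  assumes B: "subgroup B G" and a: "a \<in> carrier G"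
    and no_pow: "\<And>n::nat. n > 0 \<Longrightarrow> a [^] n \<notin> B" and k: "a [^] (k::int) \<in> B"
  shows "k = 0"
proof (rule ccontr)
  assume "k \<noteq> 0"
  have "a [^] (- k) \<in> B" using subgroup.m_inv_closed[OF B k] a by (simp add: int_pow_neg)
  then have "a [^] nat \<bar>k\<bar> \<in> B" using k by (cases "k > 0") (simp_all add: pow_nat)
  then show False using no_pow[of "nat \<bar>k\<bar>"] \<open>k \<noteq> 0\<close> by simp
qed

lemma int_pow_in_subgroup_dvd:
  assumes B: "subgroup B G" and a: "a \<in> carrier G"
    and m: "m > 0" "a [^] m \<in> B" and minimal: "\<And>n::nat. 0 < n \<Longrightarrow> n < m \<Longrightarrow> a [^] n \<notin> B"
    and j: "a [^] (j::int) \<in> B"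
  shows "int m dvd j"
proof -
  define r where "r = j mod int m"
  have r: "0 \<le> r" "r < int m" using m(1) unfolding r_def by auto
  have "(a [^] int m) [^] (j div int m) \<in> B"
    using subgroup_int_pow_closed[OF B] m(2) by (simp add: int_pow_int)
  then have "a [^] j \<otimes> inv ((a [^] int m) [^] (j div int m)) \<in> B"
    using j B by (simp add: subgroup.m_closed subgroup.m_inv_closed)
  also have "a [^] j \<otimes> inv ((a [^] int m) [^] (j div int m)) = a [^] r"
    using a by (simp add: int_pow_pow int_pow_diff[symmetric] r_def minus_div_mult_eq_mod[symmetric] mult.commute)
  finally have "a [^] nat r \<in> B" using r by (simp add: pow_nat)
  then have "r = 0" using minimal[of "nat r"] r by (cases "r = 0") (auto simp: nat_less_iff)
  then show ?thesis unfolding r_def by auto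
qed

abbreviation comm_subgroup :: "'a set" where
  "comm_subgroup \<equiv> derived G (carrier G)"

lemma commutator_in_derived:
  "x \<in> carrier G \<Longrightarrow> y \<in> carrier G \<Longrightarrow> x \<otimes> y \<otimes> inv x \<otimes> inv y \<in> comm_subgroup"
  unfolding derived_def by (rule generate.incl) blast

lemma normal_if_derived_subset:
  assumes B: "subgroup B G" and DB: "comm_subgroup \<subseteq> B"
  shows "B \<lhd> G"
proof (rule normal_invI[OF B])
  fix x b assume x: "x \<in> carrier G" and b: "b \<in> B"
  have bc: "b \<in> carrier G" using b subgroup.subset[OF B] by auto
  have "(x \<otimes> b \<otimes> inv x \<otimes> inv b) \<otimes> b \<in> B"
    using commutator_in_derived[OF x bc] DB b by (blast intro: subgroup.m_closed[OF B])
  then show "x \<otimes> b \<otimes> inv x \<in> B" using x bc by (simp add: m_assoc)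
qed

definition derived_gen :: "'a set \<Rightarrow> 'a set" where
  "derived_gen T = generate G (comm_subgroup \<union> T)"

lemma derived_gen_subgroup: "T \<subseteq> carrier G \<Longrightarrow> subgroup (derived_gen T) G"
  unfolding derived_gen_def
  by (rule generate_is_subgroup) (use derived_in_carrier[of "carrier G"] in auto)

lemma derived_subset_derived_gen: "comm_subgroup \<subseteq> derived_gen T"
  unfolding derived_gen_def using generate.incl[of _ "comm_subgroup \<union> T" G] by blast

lemma derived_gen_empty: "derived_gen {} = comm_subgroup"
  using derived_subset_derived_gen[of "{}"]
    generate_subgroup_incl[OF _ derived_is_subgroup[OF subset_refl]]
  unfolding derived_gen_def by auto

lemma normal_mult_int_pow_subgroup:
  assumes B: "B \<lhd> G" and a: "a \<in> carrier G"
  shows "subgroup {b \<otimes> a [^] (k::int) | b k. b \<in> B} G" (is "subgroup ?M G")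
proof (rule subgroupI)
  interpret B: normal B G by (rule B)
  show "?M \<subseteq> carrier G" using a by auto
  have "\<one> = \<one> \<otimes> a [^] (0::int)" by simp
  then show "?M \<noteq> {}" using B.one_closed by blast
  fix x y assume "x \<in> ?M" "y \<in> ?M"
  then obtain b b' and k j :: int where bk: "b \<in> B" "x = b \<otimes> a [^] k"
    and bj: "b' \<in> B" "y = b' \<otimes> a [^] j" by blast
  have bc: "b \<in> carrier G" "b' \<in> carrier G" using bk bj by auto
  have "inv x = (a [^] (- k) \<otimes> inv b \<otimes> inv (a [^] (- k))) \<otimes> a [^] (- k)"
    using bk bc a by (simp add: inv_mult_group m_assoc int_pow_neg)
  moreover have "a [^] (- k) \<otimes> inv b \<otimes> inv (a [^] (- k)) \<in> B"
    using B.inv_op_closed2 a bk(1) by simp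
  ultimately show "inv x \<in> ?M" by blast
  have "x \<otimes> y = (b \<otimes> (a [^] k \<otimes> b' \<otimes> inv (a [^] k))) \<otimes> a [^] (k + j)"
    using bk bj bc a by (simp add: m_assoc int_pow_mult)
  moreover have "b \<otimes> (a [^] k \<otimes> b' \<otimes> inv (a [^] k)) \<in> B"
    using B.inv_op_closed2 a bk(1) bj(1) by simp
  ultimately show "x \<otimes> y \<in> ?M" by blast
qed

lemma derived_gen_insert:
  assumes T: "T \<subseteq> carrier G" and a: "a \<in> carrier G"
  shows "derived_gen (insert a T) = {b \<otimes> a [^] (k::int) | b k. b \<in> derived_gen T}"
    (is "_ = ?M")
proof
  interpret B: subgroup "derived_gen T" G using derived_gen_subgroup[OF T] .
  interpret B': subgroup "derived_gen (insert a T)" G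
    using derived_gen_subgroup T a by simp
  have "comm_subgroup \<union> insert a T \<subseteq> ?M"
  proof
    fix x assume x: "x \<in> comm_subgroup \<union> insert a T"
    show "x \<in> ?M"
    proof (cases "x = a")
      case True
      then have "x = \<one> \<otimes> a [^] (1::int)" using a by simp
      then show ?thesis using B.one_closed by blast
    next
      case False
      then have "x \<in> derived_gen T" using x unfolding derived_gen_def by (auto intro: generate.incl)
      moreover have "x = x \<otimes> a [^] (0::int)" using calculation by simp
      ultimately show ?thesis by blast
    qed
  qed
  then show "derived_gen (insert a T) \<subseteq> ?M"
    unfolding derived_gen_def[of "insert a T"]
    by (rule generate_subgroup_incl[OF _ normal_mult_int_pow_subgroup[OF
          normal_if_derived_subset[OF B.subgroup_axioms derived_subset_derived_gen] a]])
  have "derived_gen T \<subseteq> derived_gen (insert a T)"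
    unfolding derived_gen_def by (rule mono_generate) blast
  moreover have "a \<in> derived_gen (insert a T)"
    unfolding derived_gen_def by (rule generate.incl) simp
  ultimately show "?M \<subseteq> derived_gen (insert a T)"
    using B'.m_closed subgroup_int_pow_closed[OF B'.subgroup_axioms] by blast
qed

text \<open>
  Induction over a finite generating set: the subgroup generated by \<open>G'\<close> and finitely many
  generators is either covered by finitely many cosets of \<open>G'\<close> or carries a nonzero
  \<open>\<int>\<close>-valued character vanishing on \<open>G'\<close>.
\<close>

definition finite_mod_derived :: "'a set \<Rightarrow> bool" where
  "finite_mod_derived B \<longleftrightarrow> (\<exists>R. finite R \<and> R \<subseteq> carrier G \<and> B \<subseteq> (\<Union>r\<in>R. comm_subgroup #> r))"

definition nontrivial_int_character :: "'a set \<Rightarrow> bool" where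
  "nontrivial_int_character B \<longleftrightarrow>
     (\<exists>f \<in> hom (G\<lparr>carrier := B\<rparr>) integer_group. (\<forall>d\<in>comm_subgroup. f d = 0) \<and> (\<exists>x\<in>B. f x \<noteq> 0))"

lemma finite_mod_derived_insert:
  assumes T: "T \<subseteq> carrier G" and a: "a \<in> carrier G" and fin: "finite_mod_derived (derived_gen T)"
    and m: "m > (0::nat)" "a [^] m \<in> derived_gen T"
  shows "finite_mod_derived (derived_gen (insert a T))"
proof -
  interpret B: subgroup "derived_gen T" G using derived_gen_subgroup[OF T] .
  obtain R where R: "finite R" "R \<subseteq> carrier G" "derived_gen T \<subseteq> (\<Union>r\<in>R. comm_subgroup #> r)"
    using fin unfolding finite_mod_derived_def by blast
  define R' where "R' = (\<lambda>(r, j). r \<otimes> a [^] j) ` (R \<times> {..<m})"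
  have "x \<in> (\<Union>r\<in>R'. comm_subgroup #> r)" if x: "x \<in> derived_gen (insert a T)" for x
  proof -
    obtain b and k :: int where b: "b \<in> derived_gen T" and x_eq: "x = b \<otimes> a [^] k"
      using x derived_gen_insert[OF T a] by blast
    define j where "j = k mod int m"
    have j: "0 \<le> j" "j < int m" using m(1) unfolding j_def by auto
    have "b \<otimes> (a [^] int m) [^] (k div int m) \<in> derived_gen T"
      using B.m_closed[OF b] subgroup_int_pow_closed[OF B.subgroup_axioms] m(2)
      by (simp add: int_pow_int)
    then obtain r d where r: "r \<in> R" and d: "d \<in> comm_subgroup"
      and rd: "b \<otimes> (a [^] int m) [^] (k div int m) = d \<otimes> r"
      using R(3) unfolding r_coset_def by blast
    have dr: "d \<in> carrier G" "r \<in> carrier G"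
      using d r R(2) derived_in_carrier[of "carrier G"] by auto
    have "a [^] k = (a [^] int m) [^] (k div int m) \<otimes> a [^] j"
      using a by (simp add: j_def int_pow_pow int_pow_mult[symmetric])
    then have "x = d \<otimes> (r \<otimes> a [^] nat j)"
      using x_eq rd dr a b j(1) by (simp add: m_assoc[symmetric])
    moreover have "r \<otimes> a [^] nat j \<in> R'"
      unfolding R'_def using r j by (intro image_eqI[of _ _ "(r, nat j)"]) auto
    ultimately show ?thesis using d unfolding r_coset_def by blast
  qed
  moreover have "finite R'" "R' \<subseteq> carrier G" unfolding R'_def using R(1,2) a by auto
  ultimately show ?thesis unfolding finite_mod_derived_def by blast
qed

lemma int_character_extend_insert:
  fixes g :: "'a \<Rightarrow> int \<Rightarrow> int"
  assumes T: "T \<subseteq> carrier G" and a: "a \<in> carrier G"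
    and well_defined: "\<And>b b' k k'. b \<in> derived_gen T \<Longrightarrow> b' \<in> derived_gen T \<Longrightarrow>
          b \<otimes> a [^] k = b' \<otimes> a [^] k' \<Longrightarrow> g b k = g b' k'"
    and additive: "\<And>b b' k j. b \<in> derived_gen T \<Longrightarrow> b' \<in> derived_gen T \<Longrightarrow>
          g (b \<otimes> (a [^] k \<otimes> b' \<otimes> inv (a [^] k))) (k + j) = g b k + g b' j"
  obtains f where "f \<in> hom (G\<lparr>carrier := derived_gen (insert a T)\<rparr>) integer_group"
    and "\<And>b k. b \<in> derived_gen T \<Longrightarrow> f (b \<otimes> a [^] k) = g b k"
proof -
  interpret B: normal "derived_gen T" G
    using normal_if_derived_subset[OF derived_gen_subgroup[OF T] derived_subset_derived_gen] .
  define f where "f x = (SOME v. \<exists>b\<in>derived_gen T. \<exists>k. x = b \<otimes> a [^] k \<and> v = g b k)" for x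
  have f_eq: "f (b \<otimes> a [^] k) = g b k" if b: "b \<in> derived_gen T" for b k
    unfolding f_def
  proof (rule someI2[of _ "g b k"])
    show "\<exists>b'\<in>derived_gen T. \<exists>k'. b \<otimes> a [^] k = b' \<otimes> a [^] k' \<and> g b k = g b' k'"
      using b by blast
    fix v assume "\<exists>b'\<in>derived_gen T. \<exists>k'. b \<otimes> a [^] k = b' \<otimes> a [^] k' \<and> v = g b' k'"
    then show "v = g b k" using well_defined[OF b] by metis
  qed
  have "f \<in> hom (G\<lparr>carrier := derived_gen (insert a T)\<rparr>) integer_group"
    unfolding hom_integer_group_iff
  proof (intro ballI)
    fix x y assume x: "x \<in> derived_gen (insert a T)" and y: "y \<in> derived_gen (insert a T)"
    obtain b and k :: int where b: "b \<in> derived_gen T" "x = b \<otimes> a [^] k"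
      using x unfolding derived_gen_insert[OF T a] by blast
    obtain b' and j :: int where b': "b' \<in> derived_gen T" "y = b' \<otimes> a [^] j"
      using y unfolding derived_gen_insert[OF T a] by blast
    have conj: "a [^] k \<otimes> b' \<otimes> inv (a [^] k) \<in> derived_gen T"
      using B.inv_op_closed2 a b'(1) by simp
    have "x \<otimes> y = (b \<otimes> (a [^] k \<otimes> b' \<otimes> inv (a [^] k))) \<otimes> a [^] (k + j)"
      using b b' a by (simp add: m_assoc int_pow_mult)
    then have "f (x \<otimes> y) = g (b \<otimes> (a [^] k \<otimes> b' \<otimes> inv (a [^] k))) (k + j)"
      using f_eq B.m_closed[OF b(1) conj] by simp
    also have "\<dots> = f x + f y"
      using additive[OF b(1) b'(1)] f_eq b b' by simp
    finally show "f (x \<otimes> y) = f x + f y" .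
  qed
  then show thesis using f_eq by (rule that)
qed

lemma nontrivial_int_character_insert_free:
  assumes T: "T \<subseteq> carrier G" and a: "a \<in> carrier G"
    and no_pow: "\<And>n::nat. n > 0 \<Longrightarrow> a [^] n \<notin> derived_gen T"
  shows "nontrivial_int_character (derived_gen (insert a T))"
proof -
  interpret B: subgroup "derived_gen T" G using derived_gen_subgroup[OF T] .
  have "k = k'" if "b \<in> derived_gen T" "b' \<in> derived_gen T" "b \<otimes> a [^] k = b' \<otimes> a [^] k'"
    for b b' and k k' :: int
  proof -
    have "inv b' \<otimes> b = a [^] (k' - k)"
      using mult_int_pow_eq_imp[OF a B.mem_carrier B.mem_carrier that(3)] that(1,2) .
    then have "a [^] (k' - k) \<in> derived_gen T"
      using B.m_closed[OF B.m_inv_closed[OF that(2)] that(1)] by simp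
    then show ?thesis using int_pow_in_subgroup_eq_0[OF B.subgroup_axioms a no_pow] by fastforce
  qed
  then obtain f where f: "f \<in> hom (G\<lparr>carrier := derived_gen (insert a T)\<rparr>) integer_group"
    and f_eq: "\<And>b k. b \<in> derived_gen T \<Longrightarrow> f (b \<otimes> a [^] k) = k"
    using int_character_extend_insert[OF T a, of "\<lambda>b k. k"] by blast
  have "f d = 0" if "d \<in> comm_subgroup" for d
    using f_eq[of d 0] that derived_subset_derived_gen by auto
  moreover have "f a \<noteq> 0" using f_eq[of \<one> 1] a by simp
  moreover have "a \<in> derived_gen (insert a T)"
    unfolding derived_gen_def by (rule generate.incl) simp
  ultimately show ?thesis unfolding nontrivial_int_character_def using f by blast
qed

lemma int_character_conj:
  assumes B: "subgroup B G" and DB: "comm_subgroup \<subseteq> B"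
    and f: "f \<in> hom (G\<lparr>carrier := B\<rparr>) integer_group" and f_derived: "\<forall>d\<in>comm_subgroup. f d = 0"
    and x: "x \<in> carrier G" and b: "b \<in> B"
  shows "f (x \<otimes> b \<otimes> inv x) = f b"
proof -
  interpret B: normal B G using normal_if_derived_subset[OF B DB] .
  have comm: "x \<otimes> b \<otimes> inv x \<otimes> inv b \<in> comm_subgroup"
    using commutator_in_derived[OF x] b by simp
  have "x \<otimes> b \<otimes> inv x = (x \<otimes> b \<otimes> inv x \<otimes> inv b) \<otimes> b" using x b by (simp add: m_assoc)
  also have "f \<dots> = f b"
    using f comm f_derived DB b unfolding hom_integer_group_iff by (simp add: subset_iff)
  finally show ?thesis .
qed

lemma int_character_mult_int_pow_eq:
  assumes B: "subgroup B G" and f: "f \<in> hom (G\<lparr>carrier := B\<rparr>) integer_group"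
    and a: "a \<in> carrier G" and m: "m > 0" "a [^] m \<in> B"
    and minimal: "\<And>n::nat. 0 < n \<Longrightarrow> n < m \<Longrightarrow> a [^] n \<notin> B"
    and b: "b \<in> B" "b' \<in> B" and eq: "b \<otimes> a [^] (k::int) = b' \<otimes> a [^] (k'::int)"
  shows "int m * f b + k * f (a [^] m) = int m * f b' + k' * f (a [^] m)"
proof -
  interpret B: subgroup B G by (rule B)
  have diff: "inv b' \<otimes> b = a [^] (k' - k)"
    using mult_int_pow_eq_imp[OF a B.mem_carrier B.mem_carrier eq] b .
  then have "a [^] (k' - k) \<in> B" using B.m_closed[OF B.m_inv_closed[OF b(2)] b(1)] by simp
  then have "int m dvd k' - k" using int_pow_in_subgroup_dvd[OF B a m minimal] by blast
  then obtain q where "k' - k = int m * q" by (rule dvdE)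
  then have q: "k' = k + int m * q" by simp
  have "f b - f b' = f (inv b' \<otimes> b)"
    using f b int_character_inv_pow(1)[OF B f b(2)] unfolding hom_integer_group_iff by simp
  also have "\<dots> = f ((a [^] int m) [^] q)" using diff q a by (simp add: int_pow_pow)
  also have "\<dots> = q * f (a [^] m)"
    using int_character_inv_pow(2)[OF B f, of "a [^] int m" q] m(2) by (simp add: int_pow_int)
  finally have "f b = f b' + q * f (a [^] m)" by simp
  then show ?thesis unfolding q by (simp add: algebra_simps)
qed

lemma nontrivial_int_character_insert_torsion:
  assumes T: "T \<subseteq> carrier G" and a: "a \<in> carrier G"
    and char: "nontrivial_int_character (derived_gen T)"
    and m: "m > (0::nat)" "a [^] m \<in> derived_gen T"
    and minimal: "\<And>n::nat. 0 < n \<Longrightarrow> n < m \<Longrightarrow> a [^] n \<notin> derived_gen T"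
  shows "nontrivial_int_character (derived_gen (insert a T))"
proof -
  note B = derived_gen_subgroup[OF T] and DB = derived_subset_derived_gen[of T]
  obtain f0 where f0: "f0 \<in> hom (G\<lparr>carrier := derived_gen T\<rparr>) integer_group"
    and f0_derived: "\<forall>d\<in>comm_subgroup. f0 d = 0"
    and f0_nonzero: "\<exists>x\<in>derived_gen T. f0 x \<noteq> 0"
    using char unfolding nontrivial_int_character_def by blast
  have f0_mult: "f0 (x \<otimes> y) = f0 x + f0 y" if "x \<in> derived_gen T" "y \<in> derived_gen T" for x y
    using f0 that unfolding hom_integer_group_iff by blast
  \<comment> \<open>\<open>m\<close> times the extension sending \<open>a\<close> to \<open>f0 (a\<^sup>m) / m\<close>, kept integral\<close>
  define g where "g b k = int m * f0 b + k * f0 (a [^] m)" for b k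
  have "g (b \<otimes> (a [^] k \<otimes> b' \<otimes> inv (a [^] k))) (k + j) = g b k + g b' j"
    if b: "b \<in> derived_gen T" "b' \<in> derived_gen T" for b b' and k j :: int
  proof -
    have "a [^] k \<otimes> b' \<otimes> inv (a [^] k) \<in> derived_gen T"
      using normal.inv_op_closed2[OF normal_if_derived_subset[OF B DB]] a b by simp
    then show ?thesis
      using f0_mult b int_character_conj[OF B DB f0 f0_derived _ b(2), of "a [^] k"] a
      unfolding g_def by (simp add: algebra_simps)
  qed
  then obtain f where f: "f \<in> hom (G\<lparr>carrier := derived_gen (insert a T)\<rparr>) integer_group"
    and f_eq: "\<And>b k. b \<in> derived_gen T \<Longrightarrow> f (b \<otimes> a [^] k) = g b k"
    using int_character_extend_insert[OF T a, of g] int_character_mult_int_pow_eq[OF B f0 a m minimal]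
    unfolding g_def by blast
  have f_B: "f b = int m * f0 b" if "b \<in> derived_gen T" for b
    using f_eq[of b 0] that subgroup.mem_carrier[OF B that] unfolding g_def by simp
  have "\<forall>d\<in>comm_subgroup. f d = 0" using f_B f0_derived DB by auto
  moreover obtain x where "x \<in> derived_gen T" "f x \<noteq> 0"
    using f0_nonzero f_B m(1) by auto
  moreover have "derived_gen T \<subseteq> derived_gen (insert a T)"
    unfolding derived_gen_def by (rule mono_generate) blast
  ultimately show ?thesis unfolding nontrivial_int_character_def using f by blast
qed

lemma finite_mod_derived_or_nontrivial_int_character:
  assumes "finite T" "T \<subseteq> carrier G"
  shows "finite_mod_derived (derived_gen T) \<or> nontrivial_int_character (derived_gen T)"
  using assms
proof (induction T rule: finite_induct)
  case empty
  have "comm_subgroup \<subseteq> comm_subgroup #> \<one>"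
    using derived_in_carrier[of "carrier G"] by simp
  then show ?case unfolding finite_mod_derived_def derived_gen_empty by blast
next
  case (insert a T)
  then have T: "T \<subseteq> carrier G" and a: "a \<in> carrier G" by auto
  show ?case
  proof (cases "\<exists>n::nat. n > 0 \<and> a [^] n \<in> derived_gen T")
    case True
    define m where "m = (LEAST n::nat. n > 0 \<and> a [^] n \<in> derived_gen T)"
    have m: "m > 0" "a [^] m \<in> derived_gen T"
      using LeastI_ex[OF True] unfolding m_def by auto
    have minimal: "a [^] n \<notin> derived_gen T" if "0 < n" "n < m" for n :: nat
      using not_less_Least[of n] that unfolding m_def by blast
    show ?thesis
      using insert.IH[OF T] finite_mod_derived_insert[OF T a _ m]
        nontrivial_int_character_insert_torsion[OF T a _ m minimal] by blast
  next
    case False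
    then show ?thesis using nontrivial_int_character_insert_free[OF T a] by blast
  qed
qed

lemma finite_rcosets_if_finite_mod_derived:
  assumes "finite_mod_derived (carrier G)"
  shows "finite (rcosets comm_subgroup)"
proof -
  obtain R where R: "finite R" "R \<subseteq> carrier G" "carrier G \<subseteq> (\<Union>r\<in>R. comm_subgroup #> r)"
    using assms unfolding finite_mod_derived_def by blast
  have "rcosets comm_subgroup \<subseteq> (\<lambda>r. comm_subgroup #> r) ` R"
  proof
    fix C assume "C \<in> rcosets comm_subgroup"
    then obtain x where x: "x \<in> carrier G" and C: "C = comm_subgroup #> x"
      unfolding RCOSETS_def by blast
    obtain r where r: "r \<in> R" "x \<in> comm_subgroup #> r" using R(3) x by blast
    have "comm_subgroup #> r = C"
      using repr_independence[OF r(2)] R(2) r(1) derived_is_subgroup C by blast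
    then show "C \<in> (\<lambda>r. comm_subgroup #> r) ` R" using r(1) by blast
  qed
  then show ?thesis using R(1) finite_surj by blast
qed

lemma nonzero_hom_integer_group_if_infinite_abelianization:
  assumes "finitely_generated_group G" and "infinite (rcosets comm_subgroup)"
  obtains f x where "f \<in> hom G integer_group" "x \<in> carrier G" "f x \<noteq> 0"
proof -
  obtain S where S: "finite S" "S \<subseteq> carrier G" "generate G S = carrier G"
    using assms(1) unfolding finitely_generated_group_def by blast
  have "generate G S \<subseteq> derived_gen S"
    unfolding derived_gen_def by (rule mono_generate) blast
  then have "derived_gen S = carrier G"
    using S(3) subgroup.subset[OF derived_gen_subgroup[OF S(2)]] by blast
  then show thesis
    using finite_mod_derived_or_nontrivial_int_character[OF S(1,2)]
      finite_rcosets_if_finite_mod_derived assms(2) that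
    unfolding nontrivial_int_character_def by auto
qed

lemma hom_integer_group_dvd_least_positive:
  assumes f: "f \<in> hom G integer_group" and t: "t \<in> carrier G" "f t = int d" and d: "d > 0"
    and least: "\<And>y. y \<in> carrier G \<Longrightarrow> 0 < f y \<Longrightarrow> int d \<le> f y"
    and y: "y \<in> carrier G"
  shows "int d dvd f y"
proof -
  interpret f: group_hom G integer_group f
    using f by (simp add: group_hom_def group_hom_axioms_def is_group)
  define r where "r = f y mod int d"
  have r: "0 \<le> r" "r < int d" using d unfolding r_def by auto
  have "f (y \<otimes> inv (t [^] (f y div int d))) = r"
    using y t by (simp add: f.hom_int_pow r_def minus_div_mult_eq_mod[symmetric] algebra_simps)
  then have "r = 0" using least[of "y \<otimes> inv (t [^] (f y div int d))"] r y t by fastforce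
  then show ?thesis unfolding r_def by auto
qed

lemma hom_integer_group_value_one:
  assumes f: "f \<in> hom G integer_group" and x: "x \<in> carrier G" "f x \<noteq> 0"
  obtains \<chi> t where "\<chi> \<in> hom G integer_group" "t \<in> carrier G" "\<chi> t = 1"
proof -
  interpret f: group_hom G integer_group f
    using f by (simp add: group_hom_def group_hom_axioms_def is_group)
  define P where "P n \<longleftrightarrow> n > 0 \<and> (\<exists>y\<in>carrier G. f y = int n)" for n
  have "f (inv x) = - f x" using f.hom_inv[OF x(1)] by simp
  then have "P (nat \<bar>f x\<bar>)"
    unfolding P_def using x by (cases "f x > 0") (auto intro: bexI[of _ x] bexI[of _ "inv x"])
  define d where "d = (LEAST n. P n)"
  obtain t where t: "t \<in> carrier G" "f t = int d" and d: "d > 0"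
    using LeastI[of P, OF \<open>P (nat \<bar>f x\<bar>)\<close>] unfolding P_def d_def by blast
  have "int d \<le> f y" if "y \<in> carrier G" "0 < f y" for y
  proof -
    have "P (nat (f y))" unfolding P_def using that by auto
    then show ?thesis using Least_le[of P "nat (f y)"] that(2) unfolding d_def by linarith
  qed
  then have "int d dvd f y" if "y \<in> carrier G" for y
    using hom_integer_group_dvd_least_positive[OF f t d _ that] by blast
  then have "(\<lambda>y. f y div int d) \<in> hom G integer_group"
    using f by (auto intro!: homI simp: hom_def div_plus_div_distrib_dvd_left)
  moreover have "f t div int d = 1" using t d by simp
  ultimately show thesis using t(1) that by blast
qed

end

section \<open>Cardinal divisibility\<close>

lemma eqpoll_times_if_classes_eqpoll_times:
  fixes E :: "'e set" and B :: "'b set"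
  assumes equiv: "equiv E R" and classes: "\<And>Q. Q \<in> E // R \<Longrightarrow> \<exists>Y :: 'y set. Q \<approx> B \<times> Y"
  shows "\<exists>Y :: ('e set \<times> 'y) set. E \<approx> B \<times> Y"
proof -
  obtain Y :: "'e set \<Rightarrow> 'y set" where Y: "\<And>Q. Q \<in> E // R \<Longrightarrow> Q \<approx> B \<times> Y Q"
    using classes by metis
  have "E = (\<Union>Q\<in>E // R. Q)" using Union_quotient[OF equiv] by simp
  also have "\<dots> \<approx> (\<Union>Q\<in>E // R. B \<times> ({Q} \<times> Y Q))"
  proof (rule UN_eqpoll_UN)
    fix Q assume "Q \<in> E // R"
    then have "Q \<approx> B \<times> Y Q" by (rule Y)
    also have "B \<times> Y Q \<approx> B \<times> ({Q} \<times> Y Q)"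
      by (rule times_eqpoll_cong[OF eqpoll_refl eqpoll_sym[OF times_singleton_eqpoll]])
    finally show "Q \<approx> B \<times> ({Q} \<times> Y Q)" .
  next
    show "pairwise (\<lambda>Q Q'. disjnt Q Q') (E // R)"
      using quotient_disj[OF equiv] unfolding pairwise_def disjnt_def by blast
  next
    show "pairwise (\<lambda>Q Q'. disjnt (B \<times> ({Q} \<times> Y Q)) (B \<times> ({Q'} \<times> Y Q'))) (E // R)"
      unfolding pairwise_def disjnt_def by blast
  qed
  also have "\<dots> = B \<times> Sigma (E // R) Y" by blast
  finally show ?thesis by blast
qed

lemma card_dvdI:
  assumes "E \<approx> B \<times> (Y :: 'y set)" and "B \<noteq> {}"
  shows "card_dvd B (E :: 'e set)"
proof -
  obtain b where b: "b \<in> B" using assms(2) by blast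
  have "Y \<lesssim> B \<times> Y" unfolding lepoll_def
    by (rule exI[of _ "\<lambda>y. (b, y)"]) (auto simp: inj_on_def b)
  also have "B \<times> Y \<lesssim> E" using assms(1) eqpoll_sym eqpoll_imp_lepoll by blast
  finally obtain f where f: "inj_on f Y" "f ` Y \<subseteq> E" unfolding lepoll_def by blast
  have "E \<approx> B \<times> f ` Y"
    using assms(1) times_eqpoll_cong[OF eqpoll_refl eqpoll_sym[OF inj_on_image_eqpoll_self[OF f(1)]]]
      eqpoll_trans by blast
  then show ?thesis unfolding card_dvd_def by blast
qed

section \<open>Centres and transversals of subgroups\<close>

definition centre :: "('a, 'c) monoid_scheme \<Rightarrow> 'a set \<Rightarrow> 'a set" where
  "centre G H = {z \<in> H. \<forall>h\<in>H. z \<otimes>\<^bsub>G\<^esub> h = h \<otimes>\<^bsub>G\<^esub> z}"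

lemma centre_subset: "centre G H \<subseteq> H"
  unfolding centre_def by auto

lemma centre_commute: "z \<in> centre G H \<Longrightarrow> h \<in> H \<Longrightarrow> z \<otimes>\<^bsub>G\<^esub> h = h \<otimes>\<^bsub>G\<^esub> z"
  unfolding centre_def by auto

context group begin

lemma subgroup_centre:
  assumes H: "subgroup H G" shows "subgroup (centre G H) G"
proof (rule subgroupI)
  interpret H: subgroup H G by (rule H)
  show "centre G H \<subseteq> carrier G" using subset_trans[OF centre_subset H.subset] .
  have "\<one> \<in> centre G H" unfolding centre_def using H.one_closed H.mem_carrier by auto
  then show "centre G H \<noteq> {}" by blast
  fix a b assume a: "a \<in> centre G H" and b: "b \<in> centre G H"
  have ab: "a \<in> H" "b \<in> H" using a b centre_subset[of G H] by auto
  then have abc: "a \<in> carrier G" "b \<in> carrier G" by (simp_all add: H.mem_carrier)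
  have "inv a \<otimes> h = h \<otimes> inv a" if h: "h \<in> H" for h
  proof -
    have hc: "h \<in> carrier G" using h by (rule H.mem_carrier)
    have "inv a \<otimes> h = inv a \<otimes> (h \<otimes> a) \<otimes> inv a" using abc hc by (simp add: m_assoc)
    also have "\<dots> = inv a \<otimes> (a \<otimes> h) \<otimes> inv a" using centre_commute[OF a h] by simp
    also have "\<dots> = h \<otimes> inv a" using abc hc by (simp add: m_assoc[symmetric])
    finally show ?thesis .
  qed
  then show "inv a \<in> centre G H" unfolding centre_def using H.m_inv_closed[OF ab(1)] by blast
  have "a \<otimes> b \<otimes> h = h \<otimes> (a \<otimes> b)" if h: "h \<in> H" for h
  proof -
    have hc: "h \<in> carrier G" using h by (rule H.mem_carrier)
    have "a \<otimes> b \<otimes> h = a \<otimes> (h \<otimes> b)" using centre_commute[OF b h] abc hc by (simp add: m_assoc)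
    also have "\<dots> = h \<otimes> (a \<otimes> b)"
      using centre_commute[OF a h] abc hc by (simp add: m_assoc[symmetric])
    finally show ?thesis .
  qed
  then show "a \<otimes> b \<in> centre G H" unfolding centre_def using H.m_closed[OF ab] by blast
qed

lemma centre_normal_conj:
  assumes H: "H \<lhd> G" and g: "g \<in> carrier G" and z: "z \<in> centre G H"
  shows "g \<otimes> z \<otimes> inv g \<in> centre G H"
proof -
  interpret H: normal H G by (rule H)
  have zH: "z \<in> H" using subsetD[OF centre_subset z] .
  then have zc: "z \<in> carrier G" by (rule H.mem_carrier)
  have "g \<otimes> z \<otimes> inv g \<otimes> h = h \<otimes> (g \<otimes> z \<otimes> inv g)" if h: "h \<in> H" for h
  proof -
    have hc: "h \<in> carrier G" using h by (rule H.mem_carrier)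
    have "inv g \<otimes> h \<otimes> g \<in> H" using H.inv_op_closed1[OF g h] .
    then have "z \<otimes> (inv g \<otimes> h \<otimes> g) = (inv g \<otimes> h \<otimes> g) \<otimes> z" by (rule centre_commute[OF z])
    then have "g \<otimes> (z \<otimes> (inv g \<otimes> h \<otimes> g)) \<otimes> inv g = g \<otimes> ((inv g \<otimes> h \<otimes> g) \<otimes> z) \<otimes> inv g"
      by simp
    then show ?thesis using g hc zc by (simp add: m_assoc)
  qed
  then show ?thesis unfolding centre_def using H.inv_op_closed2[OF g zH] by blast
qed

lemma subgroup_transversal:
  assumes H: "subgroup H G" and Z: "subgroup Z G" and ZH: "Z \<subseteq> H"
  obtains T where "T \<subseteq> H" and "bij_betw (\<lambda>(r, z). r \<otimes> z) (T \<times> Z) H"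
proof -
  interpret H: subgroup H G by (rule H)
  interpret Z: subgroup Z G by (rule Z)
  have lcos_mem: "x \<otimes> z \<in> x <# Z" if "z \<in> Z" for x z
    using that unfolding l_coset_def by blast
  define rep where "rep h = (SOME r. r \<in> h <# Z)" for h
  have rep: "rep h \<in> h <# Z" if "h \<in> carrier G" for h
    unfolding rep_def using lcos_self[OF that Z] by (rule someI)
  have rep_cong: "rep h = rep h'" if "h <# Z = h' <# Z" for h h'
    unfolding rep_def that ..
  have rep_H: "rep h \<in> H" and rep_rep: "rep (rep h) = rep h" if h: "h \<in> H" for h
  proof -
    have hc: "h \<in> carrier G" using h by (rule H.mem_carrier)
    obtain z where z: "z \<in> Z" and rep_eq: "rep h = h \<otimes> z"
      using rep[OF hc] unfolding l_coset_def by blast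
    show "rep h \<in> H" unfolding rep_eq using h z ZH by (blast intro: H.m_closed)
    have "h <# Z = rep h <# Z" by (rule l_repr_independence[OF rep[OF hc] hc Z])
    then show "rep (rep h) = rep h" by (rule rep_cong[symmetric])
  qed
  have "bij_betw (\<lambda>(r, z). r \<otimes> z) (rep ` H \<times> Z) H"
    unfolding bij_betw_def
  proof
    show "inj_on (\<lambda>(r, z). r \<otimes> z) (rep ` H \<times> Z)"
    proof (rule inj_onI, clarify)
      fix a a' z z' assume a: "a \<in> H" "a' \<in> H" and z: "z \<in> Z" "z' \<in> Z"
        and eq: "rep a \<otimes> z = rep a' \<otimes> z'"
      have r: "rep a \<in> carrier G" "rep a' \<in> carrier G" using rep_H a by auto
      have "rep a <# Z = (rep a \<otimes> z) <# Z"
        by (rule l_repr_independence[OF lcos_mem[OF z(1)] r(1) Z])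
      also have "\<dots> = rep a' <# Z"
        unfolding eq by (rule l_repr_independence[OF lcos_mem[OF z(2)] r(2) Z, symmetric])
      finally have "rep (rep a) = rep (rep a')" by (rule rep_cong)
      then have "rep a = rep a'" using rep_rep a by simp
      then show "rep a = rep a' \<and> z = z'" using eq r z by simp
    qed
    show "(\<lambda>(r, z). r \<otimes> z) ` (rep ` H \<times> Z) = H"
    proof
      show "(\<lambda>(r, z). r \<otimes> z) ` (rep ` H \<times> Z) \<subseteq> H"
        using rep_H ZH by (auto intro: H.m_closed)
      show "H \<subseteq> (\<lambda>(r, z). r \<otimes> z) ` (rep ` H \<times> Z)"
      proof
        fix h assume h: "h \<in> H"
        obtain z where z: "z \<in> Z" "rep h = h \<otimes> z"
          using rep[OF H.mem_carrier[OF h]] unfolding l_coset_def by blast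
        then have "h = rep h \<otimes> inv z" using h by (simp add: m_assoc)
        moreover have "(rep h, inv z) \<in> rep ` H \<times> Z" using h z(1) by simp
        ultimately show "h \<in> (\<lambda>(r, z). r \<otimes> z) ` (rep ` H \<times> Z)"
          by (intro image_eqI[of _ _ "(rep h, inv z)"]) simp_all
      qed
    qed
  qed
  moreover have "rep ` H \<subseteq> H" using rep_H by blast
  ultimately show thesis by (intro that)
qed

lemma int_pow_conj_add_one:
  "x \<in> carrier G \<Longrightarrow> h \<in> carrier G \<Longrightarrow>
    x [^] (i + 1 :: int) \<otimes> h \<otimes> inv (x [^] (i + 1)) = x [^] i \<otimes> (x \<otimes> h \<otimes> inv x) \<otimes> inv (x [^] i)"
  by (simp add: int_pow_mult m_assoc inv_mult_group)

lemma int_pow_conj_diff_one: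
  "x \<in> carrier G \<Longrightarrow> h \<in> carrier G \<Longrightarrow>
    x [^] (i - 1 :: int) \<otimes> h \<otimes> inv (x [^] (i - 1)) = x [^] i \<otimes> (inv x \<otimes> h \<otimes> x) \<otimes> inv (x [^] i)"
  by (simp add: int_pow_diff m_assoc inv_mult_group)

lemma int_pow_conj_eq:
  assumes H: "H \<subseteq> carrier G" and x: "x \<in> carrier G" and y: "y \<in> carrier G"
    and same: "\<And>h. h \<in> H \<Longrightarrow> x \<otimes> h \<otimes> inv x = y \<otimes> h \<otimes> inv y"
    and normalizes: "\<And>h. h \<in> H \<Longrightarrow> y \<otimes> h \<otimes> inv y \<in> H" "\<And>h. h \<in> H \<Longrightarrow> inv y \<otimes> h \<otimes> y \<in> H"
  shows "h \<in> H \<Longrightarrow> x [^] (n::int) \<otimes> h \<otimes> inv (x [^] n) = y [^] n \<otimes> h \<otimes> inv (y [^] n)"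
proof (induction n arbitrary: h rule: int_induct[where k = 0])
  case base
  then show ?case using H by auto
next
  case (step1 i)
  then show ?case
    using int_pow_conj_add_one[OF x] int_pow_conj_add_one[OF y] same normalizes(1) H by auto
next
  case (step2 i)
  let ?h' = "inv y \<otimes> h \<otimes> y"
  have hc: "h \<in> carrier G" and h': "?h' \<in> H" using step2.prems H normalizes(2) by auto
  then have h'c: "?h' \<in> carrier G" using H by auto
  have "x \<otimes> ?h' \<otimes> inv x = h"
    using same[OF h'] y hc by (simp add: m_assoc)
  then have "inv x \<otimes> h \<otimes> x = inv x \<otimes> (x \<otimes> ?h' \<otimes> inv x) \<otimes> x" by simp
  also have "\<dots> = ?h'" using x h'c by (simp add: m_assoc)
  finally have "inv x \<otimes> h \<otimes> x = ?h'" .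
  then show ?case
    using int_pow_conj_diff_one[OF x hc] int_pow_conj_diff_one[OF y hc]
      step2.IH[OF normalizes(2)[OF step2.prems]] by simp
qed

end

section \<open>Twisting surjective homomorphisms\<close>

locale hom_onto_integers = F: group F + G: group G
  for F :: "('a, 'c) monoid_scheme" and G :: "('b, 'd) monoid_scheme" (structure) +
  fixes chi :: "'a \<Rightarrow> int" and t :: 'a
  assumes chi_hom: "chi \<in> hom F integer_group"
    and t_carrier: "t \<in> carrier F" and chi_t: "chi t = 1"
begin

sublocale chi: group_hom F integer_group chi
  by (simp add: group_hom_def group_hom_axioms_def chi_hom F.group_axioms)

abbreviation K :: "'a set" where "K \<equiv> kernel F integer_group chi"

definition kernel_part :: "'a \<Rightarrow> 'a" where
  "kernel_part x = x \<otimes>\<^bsub>F\<^esub> inv\<^bsub>F\<^esub> (t [^]\<^bsub>F\<^esub> chi x)"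

lemma kernel_part_in_kernel: "x \<in> carrier F \<Longrightarrow> kernel_part x \<in> K"
  unfolding kernel_part_def kernel_def using t_carrier by (simp add: chi.hom_int_pow chi_t)

lemma kernel_part_mult: "x \<in> carrier F \<Longrightarrow> x = kernel_part x \<otimes>\<^bsub>F\<^esub> t [^]\<^bsub>F\<^esub> chi x"
  unfolding kernel_part_def using t_carrier by (simp add: F.m_assoc)

lemma kernel_part_kernel: "k \<in> K \<Longrightarrow> kernel_part k = k"
  unfolding kernel_part_def kernel_def by simp

lemma kernel_part_t: "kernel_part t = \<one>\<^bsub>F\<^esub>"
  unfolding kernel_part_def using t_carrier by (simp add: chi_t)

lemma kernel_subset: "K \<subseteq> carrier F"
  unfolding kernel_def by auto

lemma group_hom_if_hom: "f \<in> hom F G \<Longrightarrow> group_hom F G f"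
  by (simp add: group_hom_def group_hom_axioms_def F.group_axioms G.group_axioms)

lemma hom_apply_kernel_part:
  assumes f: "f \<in> hom F G" and x: "x \<in> carrier F"
  shows "f x = f (kernel_part x) \<otimes> f t [^] chi x"
proof -
  interpret f: group_hom F G f using group_hom_if_hom[OF f] .
  have "kernel_part x \<in> carrier F" using kernel_part_in_kernel[OF x] kernel_subset by blast
  moreover have "f x = f (kernel_part x \<otimes>\<^bsub>F\<^esub> t [^]\<^bsub>F\<^esub> chi x)"
    using kernel_part_mult[OF x] by (rule arg_cong)
  ultimately show ?thesis using t_carrier by (simp add: f.hom_int_pow)
qed

lemma hom_eq_if_eq_on_kernel_and_t:
  assumes f: "f \<in> hom F G" "f \<in> extensional (carrier F)"
    and f': "f' \<in> hom F G" "f' \<in> extensional (carrier F)"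
    and on_K: "\<And>k. k \<in> K \<Longrightarrow> f k = f' k" and on_t: "f t = f' t"
  shows "f = f'"
proof (rule extensionalityI[OF f(2) f'(2)])
  fix x assume x: "x \<in> carrier F"
  show "f x = f' x"
    using hom_apply_kernel_part[OF f(1) x] hom_apply_kernel_part[OF f'(1) x]
      on_K[OF kernel_part_in_kernel[OF x]] on_t by simp
qed

definition image_kernel :: "('a \<Rightarrow> 'b) \<Rightarrow> 'b set" where
  "image_kernel \<phi> = \<phi> ` K"

lemma image_kernel_subgroup: "\<phi> \<in> hom F G \<Longrightarrow> subgroup (image_kernel \<phi>) G"
  unfolding image_kernel_def
  by (rule group_hom.subgroup_img_is_subgroup[OF group_hom_if_hom chi.subgroup_kernel])

lemma image_kernel_normal: "\<phi> \<in> epi F G \<Longrightarrow> image_kernel \<phi> \<lhd> G"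
  unfolding image_kernel_def epi_def
  by (auto intro: normal.surj_hom_normal_subgroup[OF chi.normal_kernel group_hom_if_hom])

lemma derived_subset_kernel: "derived F (carrier F) \<subseteq> K"
proof -
  have "chi ` derived F (carrier F) = derived integer_group (chi ` carrier F)"
    by (rule chi.derived_img[symmetric]) simp
  also have "\<dots> \<subseteq> derived integer_group (carrier integer_group)"
    by (rule group.mono_derived[OF group_integer_group]) simp
  also have "\<dots> = {0}"
    using comm_group.derived_eq_singleton[OF abelian_integer_group] by simp
  finally show ?thesis
    using F.derived_in_carrier[of "carrier F"] unfolding kernel_def by auto
qed

lemma derived_subset_image_kernel:
  assumes \<phi>: "\<phi> \<in> epi F G"
  shows "derived G (carrier G) \<subseteq> image_kernel \<phi>"
proof -
  interpret \<phi>: group_hom F G \<phi> using group_hom_if_hom \<phi> by (simp add: epi_def)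
  have "derived G (carrier G) = \<phi> ` derived F (carrier F)"
    using \<phi>.derived_img[of "carrier F"] \<phi> by (simp add: epi_def)
  then show ?thesis unfolding image_kernel_def using derived_subset_kernel by blast
qed

lemma carrier_eq_image_kernel_mult_pow:
  assumes \<phi>: "\<phi> \<in> epi F G" and y: "y \<in> carrier G"
  obtains h and n :: int where "h \<in> image_kernel \<phi>" and "y = h \<otimes> \<phi> t [^] n"
proof -
  obtain x where x: "x \<in> carrier F" "y = \<phi> x" using \<phi> y unfolding epi_def by auto
  then show thesis
    using that hom_apply_kernel_part[OF _ x(1)] \<phi> kernel_part_in_kernel[OF x(1)]
    unfolding image_kernel_def epi_def by blast
qed

definition shift :: "('a \<Rightarrow> 'b) \<Rightarrow> 'b \<Rightarrow> 'a \<Rightarrow> 'b" where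
  "shift \<phi> c x = \<phi> (kernel_part x) \<otimes> (\<phi> t \<otimes> c) [^] chi x"

lemma shift_kernel: "\<phi> \<in> hom F G \<Longrightarrow> k \<in> K \<Longrightarrow> shift \<phi> c k = \<phi> k"
  unfolding shift_def using kernel_part_kernel kernel_subset
  by (auto simp: kernel_def hom_in_carrier)

lemma shift_t: "\<phi> \<in> hom F G \<Longrightarrow> c \<in> carrier G \<Longrightarrow> shift \<phi> c t = \<phi> t \<otimes> c"
  unfolding shift_def kernel_part_t using t_carrier
  by (simp add: chi_t group_hom.hom_one[OF group_hom_if_hom] hom_in_carrier)

lemma kernel_part_mult_distrib:
  assumes x: "x \<in> carrier F" and y: "y \<in> carrier F"
  shows "kernel_part (x \<otimes>\<^bsub>F\<^esub> y) =
    kernel_part x \<otimes>\<^bsub>F\<^esub> (t [^]\<^bsub>F\<^esub> chi x \<otimes>\<^bsub>F\<^esub> kernel_part y \<otimes>\<^bsub>F\<^esub> inv\<^bsub>F\<^esub> (t [^]\<^bsub>F\<^esub> chi x))"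
  unfolding kernel_part_def using x y t_carrier
  by (simp add: F.m_assoc F.int_pow_mult F.inv_mult_group)

lemma shift_hom:
  assumes \<phi>: "\<phi> \<in> epi F G" and c: "c \<in> carrier G"
    and central: "\<And>h. h \<in> image_kernel \<phi> \<Longrightarrow> c \<otimes> h = h \<otimes> c"
  shows "shift \<phi> c \<in> hom F G"
proof (rule homI)
  interpret \<phi>: group_hom F G \<phi> using group_hom_if_hom \<phi> by (simp add: epi_def)
  interpret H: normal "image_kernel \<phi>" G using image_kernel_normal[OF \<phi>] .
  define g where "g = \<phi> t"
  have g: "g \<in> carrier G" unfolding g_def using t_carrier by simp
  have kp: "\<phi> (kernel_part x) \<in> image_kernel \<phi>" if "x \<in> carrier F" for x
    unfolding image_kernel_def using kernel_part_in_kernel[OF that] by blast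
  show "shift \<phi> c x \<in> carrier G" if "x \<in> carrier F" for x
    unfolding shift_def using kp[OF that] g c by (simp add: g_def[symmetric])
  have same_conj: "(g \<otimes> c) \<otimes> h \<otimes> inv (g \<otimes> c) = g \<otimes> h \<otimes> inv g" if h: "h \<in> image_kernel \<phi>" for h
  proof -
    have "(g \<otimes> c) \<otimes> h \<otimes> inv (g \<otimes> c) = g \<otimes> (c \<otimes> h) \<otimes> inv c \<otimes> inv g"
      using g c h by (simp add: G.m_assoc G.inv_mult_group)
    then show ?thesis using central[OF h] g c h by (simp add: G.m_assoc)
  qed
  fix x y assume x: "x \<in> carrier F" and y: "y \<in> carrier F"
  define n where "n = chi x"
  define m where "m = chi y"
  have conj: "g [^] n \<otimes> h \<otimes> inv (g [^] n) = (g \<otimes> c) [^] n \<otimes> h \<otimes> inv ((g \<otimes> c) [^] n)"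
    if "h \<in> image_kernel \<phi>" for h
    using G.int_pow_conj_eq[OF H.subset _ g same_conj H.inv_op_closed2 H.inv_op_closed1 that] g c
    by simp
  have "\<phi> (kernel_part (x \<otimes>\<^bsub>F\<^esub> y)) = \<phi> (kernel_part x) \<otimes> (g [^] n \<otimes> \<phi> (kernel_part y) \<otimes> inv (g [^] n))"
    using kernel_part_mult_distrib[OF x y] kernel_part_in_kernel[OF x] kernel_part_in_kernel[OF y]
      kernel_subset t_carrier
    by (simp add: n_def g_def \<phi>.hom_int_pow subset_iff)
  also have "\<dots> = \<phi> (kernel_part x) \<otimes> ((g \<otimes> c) [^] n \<otimes> \<phi> (kernel_part y) \<otimes> inv ((g \<otimes> c) [^] n))"
    using conj[OF kp[OF y]] by simp
  finally show "shift \<phi> c (x \<otimes>\<^bsub>F\<^esub> y) = shift \<phi> c x \<otimes> shift \<phi> c y"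
    unfolding shift_def using x y g c kp[OF x] kp[OF y]
    by (simp add: g_def[symmetric] n_def[symmetric] m_def[symmetric] G.int_pow_mult G.m_assoc)
qed

lemma shift_surj:
  assumes \<phi>: "\<phi> \<in> epi F G" and c: "c \<in> centre G (image_kernel \<phi>)"
  shows "shift \<phi> c ` carrier F = carrier G"
proof
  have hom: "\<phi> \<in> hom F G" using \<phi> by (simp add: epi_def)
  interpret H: subgroup "image_kernel \<phi>" G using image_kernel_subgroup[OF hom] .
  have cH: "c \<in> image_kernel \<phi>" using subsetD[OF centre_subset c] .
  then have cG: "c \<in> carrier G" by (rule H.mem_carrier)
  have "shift \<phi> c \<in> hom F G"
    using shift_hom[OF \<phi> cG] centre_commute[OF c] by blast
  then interpret I: subgroup "shift \<phi> c ` carrier F" G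
    by (rule group_hom.img_is_subgroup[OF group_hom_if_hom])
  show "shift \<phi> c ` carrier F \<subseteq> carrier G" by (rule I.subset)
  have H_I: "image_kernel \<phi> \<subseteq> shift \<phi> c ` carrier F"
  proof
    fix h assume "h \<in> image_kernel \<phi>"
    then obtain k where k: "k \<in> K" "h = \<phi> k" unfolding image_kernel_def by blast
    then have "h = shift \<phi> c k" using shift_kernel[OF hom] by simp
    then show "h \<in> shift \<phi> c ` carrier F" using k(1) kernel_subset by blast
  qed
  have "\<phi> t \<otimes> c \<in> shift \<phi> c ` carrier F"
    using shift_t[OF hom cG] t_carrier by (metis image_eqI)
  moreover have "inv c \<in> shift \<phi> c ` carrier F"
    using H_I H.m_inv_closed[OF cH] by blast
  ultimately have "(\<phi> t \<otimes> c) \<otimes> inv c \<in> shift \<phi> c ` carrier F" by (rule I.m_closed)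
  then have t_I: "\<phi> t \<in> shift \<phi> c ` carrier F"
    using cG hom_in_carrier[OF hom t_carrier] by (simp add: G.m_assoc)
  show "carrier G \<subseteq> shift \<phi> c ` carrier F"
  proof
    fix y assume "y \<in> carrier G"
    then obtain h and n :: int where h: "h \<in> image_kernel \<phi>" and y: "y = h \<otimes> \<phi> t [^] n"
      using carrier_eq_image_kernel_mult_pow[OF \<phi>] by blast
    have "\<phi> t [^] n \<in> shift \<phi> c ` carrier F"
      using G.subgroup_int_pow_closed[OF I.subgroup_axioms t_I] .
    then show "y \<in> shift \<phi> c ` carrier F" unfolding y using H_I h by (blast intro: I.m_closed)
  qed
qed

definition twist :: "('a \<Rightarrow> 'b) \<Rightarrow> 'b \<Rightarrow> 'b \<Rightarrow> 'a \<Rightarrow> 'b" where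
  "twist \<phi> r c = (\<lambda>x\<in>carrier F. r \<otimes> shift \<phi> c x \<otimes> inv r)"

lemma twist_extensional: "twist \<phi> r c \<in> extensional (carrier F)"
  unfolding twist_def by simp

lemma twist_kernel: "\<phi> \<in> hom F G \<Longrightarrow> k \<in> K \<Longrightarrow> twist \<phi> r c k = r \<otimes> \<phi> k \<otimes> inv r"
  unfolding twist_def using shift_kernel kernel_subset by auto

lemma twist_t: "\<phi> \<in> hom F G \<Longrightarrow> c \<in> carrier G \<Longrightarrow> twist \<phi> r c t = r \<otimes> (\<phi> t \<otimes> c) \<otimes> inv r"
  unfolding twist_def using shift_t t_carrier by simp

lemma twist_one:
  assumes "\<phi> \<in> hom F G" and "\<phi> \<in> extensional (carrier F)"
  shows "twist \<phi> \<one> \<one> = \<phi>"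
proof (rule extensionalityI[OF twist_extensional assms(2)])
  fix x assume x: "x \<in> carrier F"
  have "kernel_part x \<in> carrier F" using kernel_part_in_kernel[OF x] kernel_subset by blast
  then show "twist \<phi> \<one> \<one> x = \<phi> x"
    unfolding twist_def shift_def
    using hom_apply_kernel_part[OF assms(1) x] x t_carrier assms(1) by (simp add: hom_in_carrier)
qed

lemma twist_epi:
  assumes \<phi>: "\<phi> \<in> epi F G" and r: "r \<in> carrier G" and c: "c \<in> centre G (image_kernel \<phi>)"
  shows "twist \<phi> r c \<in> epi F G"
proof -
  have hom: "\<phi> \<in> hom F G" using \<phi> by (simp add: epi_def)
  have cG: "c \<in> carrier G"
    using subsetD[OF centre_subset c] subgroup.mem_carrier[OF image_kernel_subgroup[OF hom]] by blast
  have shift: "shift \<phi> c \<in> hom F G"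
    using shift_hom[OF \<phi> cG] centre_commute[OF c] by blast
  have shift_G: "shift \<phi> c x \<in> carrier G" if "x \<in> carrier F" for x
    using hom_in_carrier[OF shift that] .
  have "twist \<phi> r c \<in> hom F G"
  proof (rule homI)
    show "twist \<phi> r c x \<in> carrier G" if "x \<in> carrier F" for x
      unfolding twist_def using that r shift_G by simp
    fix x y assume "x \<in> carrier F" "y \<in> carrier F"
    then show "twist \<phi> r c (x \<otimes>\<^bsub>F\<^esub> y) = twist \<phi> r c x \<otimes> twist \<phi> r c y"
      unfolding twist_def using r shift_G hom_mult[OF shift] by (simp add: G.m_assoc)
  qed
  moreover have "carrier G \<subseteq> twist \<phi> r c ` carrier F"
  proof
    fix y assume y: "y \<in> carrier G"
    then have "inv r \<otimes> y \<otimes> r \<in> shift \<phi> c ` carrier F"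
      using shift_surj[OF \<phi> c] r by simp
    then obtain x where x: "x \<in> carrier F" "shift \<phi> c x = inv r \<otimes> y \<otimes> r" by auto
    then have "twist \<phi> r c x = y" unfolding twist_def using r y by (simp add: G.m_assoc)
    then show "y \<in> twist \<phi> r c ` carrier F" using x(1) by blast
  qed
  ultimately show ?thesis unfolding epi_def using hom_carrier by blast
qed

lemma image_kernel_twist:
  assumes \<phi>: "\<phi> \<in> epi F G" and r: "r \<in> carrier G"
  shows "image_kernel (twist \<phi> r c) = image_kernel \<phi>"
proof
  have hom: "\<phi> \<in> hom F G" using \<phi> by (simp add: epi_def)
  interpret H: normal "image_kernel \<phi>" G using image_kernel_normal[OF \<phi>] .
  show "image_kernel (twist \<phi> r c) \<subseteq> image_kernel \<phi>"
  proof
    fix h assume "h \<in> image_kernel (twist \<phi> r c)"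
    then obtain k where k: "k \<in> K" "h = r \<otimes> \<phi> k \<otimes> inv r"
      unfolding image_kernel_def using twist_kernel[OF hom] by auto
    have "\<phi> k \<in> image_kernel \<phi>" unfolding image_kernel_def using k(1) by blast
    then show "h \<in> image_kernel \<phi>" unfolding k(2) by (rule H.inv_op_closed2[OF r])
  qed
  show "image_kernel \<phi> \<subseteq> image_kernel (twist \<phi> r c)"
  proof
    fix h assume h: "h \<in> image_kernel \<phi>"
    then have hc: "h \<in> carrier G" by (rule H.mem_carrier)
    obtain k where k: "k \<in> K" "\<phi> k = inv r \<otimes> h \<otimes> r"
      using H.inv_op_closed1[OF r h] unfolding image_kernel_def by auto
    then have "twist \<phi> r c k = h" using twist_kernel[OF hom k(1)] r hc by (simp add: G.m_assoc)
    then show "h \<in> image_kernel (twist \<phi> r c)" unfolding image_kernel_def using k(1) by blast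
  qed
qed

lemma twist_twist:
  assumes \<phi>: "\<phi> \<in> epi F G" and r: "r \<in> image_kernel \<phi>" "r' \<in> image_kernel \<phi>"
    and c: "c \<in> centre G (image_kernel \<phi>)" "c' \<in> centre G (image_kernel \<phi>)"
  shows "twist (twist \<phi> r c) r' c' = twist \<phi> (r' \<otimes> r) (c \<otimes> c')"
proof -
  have hom: "\<phi> \<in> hom F G" using \<phi> by (simp add: epi_def)
  interpret H: subgroup "image_kernel \<phi>" G using image_kernel_subgroup[OF hom] .
  interpret Z: subgroup "centre G (image_kernel \<phi>)" G
    using G.subgroup_centre[OF H.subgroup_axioms] .
  have rG: "r \<in> carrier G" "r' \<in> carrier G" using r by auto
  have cG: "c \<in> carrier G" "c' \<in> carrier G" using c by auto
  have g: "\<phi> t \<in> carrier G" using hom_in_carrier[OF hom t_carrier] .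
  have \<psi>: "twist \<phi> r c \<in> epi F G" using twist_epi[OF \<phi> rG(1) c(1)] .
  then have \<psi>_hom: "twist \<phi> r c \<in> hom F G" by (simp add: epi_def)
  have same: "image_kernel (twist \<phi> r c) = image_kernel \<phi>" using image_kernel_twist[OF \<phi> rG(1)] .
  show ?thesis
  proof (rule hom_eq_if_eq_on_kernel_and_t)
    show "twist (twist \<phi> r c) r' c' \<in> hom F G"
      using twist_epi[OF \<psi> rG(2)] c(2) same by (simp add: epi_def)
    show "twist \<phi> (r' \<otimes> r) (c \<otimes> c') \<in> hom F G"
      using twist_epi[OF \<phi> _ Z.m_closed[OF c]] rG by (simp add: epi_def)
  next
    fix k assume k: "k \<in> K"
    have "\<phi> k \<in> carrier G" using hom_in_carrier[OF hom] k kernel_subset by blast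
    then show "twist (twist \<phi> r c) r' c' k = twist \<phi> (r' \<otimes> r) (c \<otimes> c') k"
      using twist_kernel[OF \<psi>_hom k] twist_kernel[OF hom k] rG
      by (simp add: G.m_assoc G.inv_mult_group)
  next
    have "inv r \<otimes> c' = c' \<otimes> inv r" using centre_commute[OF c(2) H.m_inv_closed[OF r(1)]] by simp
    then have "inv r \<otimes> (c' \<otimes> x) = c' \<otimes> (inv r \<otimes> x)" if "x \<in> carrier G" for x
      using that rG cG by (simp add: G.m_assoc[symmetric])
    then show "twist (twist \<phi> r c) r' c' t = twist \<phi> (r' \<otimes> r) (c \<otimes> c') t"
      using twist_t[OF \<psi>_hom cG(2)] twist_t[OF hom cG(1)] twist_t[OF hom G.m_closed[OF cG]] rG cG g
      by (simp add: G.m_assoc G.inv_mult_group)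
  qed (rule twist_extensional)+
qed

lemma twist_in_surj_homs:
  assumes "\<phi> \<in> surj_homs F G" "r \<in> carrier G" "c \<in> centre G (image_kernel \<phi>)"
  shows "twist \<phi> r c \<in> surj_homs F G"
  using assms twist_epi twist_extensional unfolding surj_homs_def by blast

definition twist_rel :: "(('a \<Rightarrow> 'b) \<times> ('a \<Rightarrow> 'b)) set" where
  "twist_rel = {(\<phi>, twist \<phi> r c) | \<phi> r c.
     \<phi> \<in> surj_homs F G \<and> r \<in> image_kernel \<phi> \<and> c \<in> centre G (image_kernel \<phi>)}"

lemma twist_relI:
  "\<phi> \<in> surj_homs F G \<Longrightarrow> r \<in> image_kernel \<phi> \<Longrightarrow> c \<in> centre G (image_kernel \<phi>) \<Longrightarrow>
    (\<phi>, twist \<phi> r c) \<in> twist_rel"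
  unfolding twist_rel_def by blast

lemma twist_relE:
  assumes "(\<phi>, \<psi>) \<in> twist_rel"
  obtains r c where "\<phi> \<in> surj_homs F G" "r \<in> image_kernel \<phi>" "c \<in> centre G (image_kernel \<phi>)"
    and "\<psi> = twist \<phi> r c"
  using assms unfolding twist_rel_def by blast

lemma surj_homsD:
  assumes "\<phi> \<in> surj_homs F G"
  shows "\<phi> \<in> epi F G" and "\<phi> \<in> hom F G" and "\<phi> \<in> extensional (carrier F)"
  using assms unfolding surj_homs_def epi_def by auto

lemma twist_rel_sym: "sym twist_rel"
proof (rule symI)
  fix \<phi> \<psi> assume "(\<phi>, \<psi>) \<in> twist_rel"
  then obtain r c where \<phi>: "\<phi> \<in> surj_homs F G" and r: "r \<in> image_kernel \<phi>"
    and c: "c \<in> centre G (image_kernel \<phi>)" and \<psi>: "\<psi> = twist \<phi> r c"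
    by (rule twist_relE)
  interpret H: subgroup "image_kernel \<phi>" G using image_kernel_subgroup[OF surj_homsD(2)[OF \<phi>]] .
  interpret Z: subgroup "centre G (image_kernel \<phi>)" G using G.subgroup_centre[OF H.subgroup_axioms] .
  have "twist \<psi> (inv r) (inv c) = twist \<phi> (inv r \<otimes> r) (c \<otimes> inv c)"
    using twist_twist[OF surj_homsD(1)[OF \<phi>] r H.m_inv_closed[OF r] c Z.m_inv_closed[OF c]] \<psi>
    by simp
  also have "\<dots> = \<phi>"
    using twist_one[OF surj_homsD(2,3)[OF \<phi>]] H.mem_carrier[OF r] Z.mem_carrier[OF c] by simp
  finally have "(\<psi>, \<phi>) = (\<psi>, twist \<psi> (inv r) (inv c))" by simp
  also have "\<dots> \<in> twist_rel"
    using twist_relI twist_in_surj_homs[OF \<phi> H.mem_carrier[OF r] c] H.m_inv_closed[OF r]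
      Z.m_inv_closed[OF c] image_kernel_twist[OF surj_homsD(1)[OF \<phi>] H.mem_carrier[OF r]] \<psi>
    by simp
  finally show "(\<psi>, \<phi>) \<in> twist_rel" .
qed

lemma twist_rel_trans: "trans twist_rel"
proof (rule transI)
  fix \<phi> \<psi> \<theta> assume \<phi>\<psi>: "(\<phi>, \<psi>) \<in> twist_rel" and \<psi>\<theta>: "(\<psi>, \<theta>) \<in> twist_rel"
  obtain r c where \<phi>: "\<phi> \<in> surj_homs F G" and r: "r \<in> image_kernel \<phi>"
    and c: "c \<in> centre G (image_kernel \<phi>)" and \<psi>: "\<psi> = twist \<phi> r c"
    using \<phi>\<psi> by (rule twist_relE)
  obtain r' c' where r': "r' \<in> image_kernel \<psi>" and c': "c' \<in> centre G (image_kernel \<psi>)"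
    and \<theta>: "\<theta> = twist \<psi> r' c'"
    using \<psi>\<theta> by (rule twist_relE)
  interpret H: subgroup "image_kernel \<phi>" G using image_kernel_subgroup[OF surj_homsD(2)[OF \<phi>]] .
  interpret Z: subgroup "centre G (image_kernel \<phi>)" G using G.subgroup_centre[OF H.subgroup_axioms] .
  have same: "image_kernel \<psi> = image_kernel \<phi>"
    using image_kernel_twist[OF surj_homsD(1)[OF \<phi>] H.mem_carrier[OF r]] \<psi> by simp
  have "\<theta> = twist \<phi> (r' \<otimes> r) (c \<otimes> c')"
    using twist_twist[OF surj_homsD(1)[OF \<phi>] r _ c] r' c' same \<psi> \<theta> by simp
  then show "(\<phi>, \<theta>) \<in> twist_rel"
    using twist_relI[OF \<phi> H.m_closed[OF _ r] Z.m_closed[OF c]] r' c' same by simp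
qed

lemma twist_rel_equiv: "equiv (surj_homs F G) twist_rel"
proof (rule equivI)
  show "twist_rel \<subseteq> surj_homs F G \<times> surj_homs F G"
  proof (rule subrelI)
    fix \<phi> \<psi> assume "(\<phi>, \<psi>) \<in> twist_rel"
    then obtain r c where \<phi>: "\<phi> \<in> surj_homs F G" and r: "r \<in> image_kernel \<phi>"
      and c: "c \<in> centre G (image_kernel \<phi>)" and \<psi>: "\<psi> = twist \<phi> r c"
      by (rule twist_relE)
    have "r \<in> carrier G"
      using subgroup.mem_carrier[OF image_kernel_subgroup[OF surj_homsD(2)[OF \<phi>]] r] .
    then show "(\<phi>, \<psi>) \<in> surj_homs F G \<times> surj_homs F G"
      using \<phi> twist_in_surj_homs[OF \<phi> _ c] \<psi> by simp
  qed
  show "refl_on (surj_homs F G) twist_rel"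
  proof (rule refl_onI)
    fix \<phi> assume \<phi>: "\<phi> \<in> surj_homs F G"
    interpret H: subgroup "image_kernel \<phi>" G using image_kernel_subgroup[OF surj_homsD(2)[OF \<phi>]] .
    have "(\<phi>, twist \<phi> \<one> \<one>) \<in> twist_rel"
      using twist_relI[OF \<phi> H.one_closed subgroup.one_closed[OF G.subgroup_centre]]
        H.subgroup_axioms by blast
    then show "(\<phi>, \<phi>) \<in> twist_rel" using twist_one[OF surj_homsD(2,3)[OF \<phi>]] by simp
  qed
qed (rule twist_rel_sym, rule twist_rel_trans)

lemma twist_rel_class:
  "\<phi> \<in> surj_homs F G \<Longrightarrow>
    twist_rel `` {\<phi>} = (\<lambda>(r, c). twist \<phi> r c) ` (image_kernel \<phi> \<times> centre G (image_kernel \<phi>))"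
proof (intro equalityI subsetI)
  fix \<psi> assume "\<psi> \<in> twist_rel `` {\<phi>}"
  then obtain r c where "r \<in> image_kernel \<phi>" "c \<in> centre G (image_kernel \<phi>)" "\<psi> = twist \<phi> r c"
    by (auto elim: twist_relE)
  then show "\<psi> \<in> (\<lambda>(r, c). twist \<phi> r c) ` (image_kernel \<phi> \<times> centre G (image_kernel \<phi>))"
    by (intro image_eqI[of _ _ "(r, c)"]) simp_all
next
  fix \<psi> assume "\<phi> \<in> surj_homs F G"
    and "\<psi> \<in> (\<lambda>(r, c). twist \<phi> r c) ` (image_kernel \<phi> \<times> centre G (image_kernel \<phi>))"
  then show "\<psi> \<in> twist_rel `` {\<phi>}" using twist_relI by auto
qed

lemma twist_eq_imp_centre:
  assumes \<phi>: "\<phi> \<in> hom F G" and r: "r \<in> image_kernel \<phi>" "r' \<in> image_kernel \<phi>"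
    and eq: "twist \<phi> r c = twist \<phi> r' c'"
  shows "inv r' \<otimes> r \<in> centre G (image_kernel \<phi>)"
proof -
  interpret H: subgroup "image_kernel \<phi>" G using image_kernel_subgroup[OF \<phi>] .
  have rG: "r \<in> carrier G" "r' \<in> carrier G" using r by auto
  have "inv r' \<otimes> r \<otimes> h = h \<otimes> (inv r' \<otimes> r)" if h: "h \<in> image_kernel \<phi>" for h
  proof -
    obtain k where k: "k \<in> K" "h = \<phi> k" using h unfolding image_kernel_def by blast
    have hc: "h \<in> carrier G" using h by (rule H.mem_carrier)
    have "r \<otimes> h \<otimes> inv r = r' \<otimes> h \<otimes> inv r'"
      using eq twist_kernel[OF \<phi> k(1), of r c] twist_kernel[OF \<phi> k(1), of r' c'] k(2) by metis
    then have "inv r' \<otimes> (r \<otimes> h \<otimes> inv r) \<otimes> r = inv r' \<otimes> (r' \<otimes> h \<otimes> inv r') \<otimes> r" by simp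
    then show ?thesis using rG hc by (simp add: G.m_assoc)
  qed
  then show ?thesis unfolding centre_def using H.m_closed[OF H.m_inv_closed[OF r(2)] r(1)] by blast
qed

lemma twist_eq_imp_eq:
  assumes \<phi>: "\<phi> \<in> hom F G" and r: "r \<in> carrier G" and c: "c \<in> carrier G" "c' \<in> carrier G"
    and eq: "twist \<phi> r c = twist \<phi> r c'"
  shows "c = c'"
proof -
  have "r \<otimes> (\<phi> t \<otimes> c) \<otimes> inv r = r \<otimes> (\<phi> t \<otimes> c') \<otimes> inv r"
    using eq twist_t[OF \<phi> c(1), of r] twist_t[OF \<phi> c(2), of r] by metis
  then show ?thesis using r c hom_in_carrier[OF \<phi> t_carrier] by simp
qed

lemma twist_mult_centre:
  assumes \<phi>: "\<phi> \<in> epi F G" and r: "r \<in> image_kernel \<phi>"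
    and z: "z \<in> centre G (image_kernel \<phi>)" and c: "c \<in> centre G (image_kernel \<phi>)"
  shows "twist \<phi> (r \<otimes> z) c = twist \<phi> r (inv (\<phi> t) \<otimes> z \<otimes> \<phi> t \<otimes> c \<otimes> inv z)"
    and "inv (\<phi> t) \<otimes> z \<otimes> \<phi> t \<otimes> c \<otimes> inv z \<in> centre G (image_kernel \<phi>)"
proof -
  have hom: "\<phi> \<in> hom F G" using \<phi> by (simp add: epi_def)
  interpret H: subgroup "image_kernel \<phi>" G using image_kernel_subgroup[OF hom] .
  interpret Z: subgroup "centre G (image_kernel \<phi>)" G using G.subgroup_centre[OF H.subgroup_axioms] .
  have g: "\<phi> t \<in> carrier G" using hom_in_carrier[OF hom t_carrier] .
  have rG: "r \<in> carrier G" and zG: "z \<in> carrier G" and cG: "c \<in> carrier G" using r z c by auto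
  have "inv (\<phi> t) \<otimes> z \<otimes> inv (inv (\<phi> t)) \<in> centre G (image_kernel \<phi>)"
    using G.centre_normal_conj[OF image_kernel_normal[OF \<phi>] G.inv_closed[OF g] z] .
  then show c': "inv (\<phi> t) \<otimes> z \<otimes> \<phi> t \<otimes> c \<otimes> inv z \<in> centre G (image_kernel \<phi>)"
    using Z.m_closed Z.m_inv_closed[OF z] c g by simp
  show "twist \<phi> (r \<otimes> z) c = twist \<phi> r (inv (\<phi> t) \<otimes> z \<otimes> \<phi> t \<otimes> c \<otimes> inv z)"
  proof (rule hom_eq_if_eq_on_kernel_and_t)
    show "twist \<phi> (r \<otimes> z) c \<in> hom F G"
      using twist_epi[OF \<phi> _ c] rG zG by (simp add: epi_def)
    show "twist \<phi> r (inv (\<phi> t) \<otimes> z \<otimes> \<phi> t \<otimes> c \<otimes> inv z) \<in> hom F G"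
      using twist_epi[OF \<phi> rG c'] by (simp add: epi_def)
  next
    fix k assume k: "k \<in> K"
    have "\<phi> k \<in> image_kernel \<phi>" unfolding image_kernel_def using k by blast
    then have "z \<otimes> \<phi> k = \<phi> k \<otimes> z" and "\<phi> k \<in> carrier G" by (auto intro: centre_commute[OF z])
    then show "twist \<phi> (r \<otimes> z) c k = twist \<phi> r (inv (\<phi> t) \<otimes> z \<otimes> \<phi> t \<otimes> c \<otimes> inv z) k"
      using twist_kernel[OF hom k] rG zG by (simp add: G.m_assoc G.inv_mult_group)
  next
    show "twist \<phi> (r \<otimes> z) c t = twist \<phi> r (inv (\<phi> t) \<otimes> z \<otimes> \<phi> t \<otimes> c \<otimes> inv z) t"
      using twist_t[OF hom cG] twist_t[OF hom Z.mem_carrier[OF c']] rG zG cG g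
      by (simp add: G.m_assoc G.inv_mult_group)
  qed (rule twist_extensional)+
qed

lemma twist_inj_on_transversal:
  assumes hom: "\<phi> \<in> hom F G" and T: "T \<subseteq> image_kernel \<phi>"
    and inj_T: "inj_on (\<lambda>(r, z). r \<otimes> z) (T \<times> centre G (image_kernel \<phi>))"
  shows "inj_on (\<lambda>(r, c). twist \<phi> r c) (T \<times> centre G (image_kernel \<phi>))"
proof (rule inj_onI, clarify)
  interpret H: subgroup "image_kernel \<phi>" G using image_kernel_subgroup[OF hom] .
  interpret Z: subgroup "centre G (image_kernel \<phi>)" G using G.subgroup_centre[OF H.subgroup_axioms] .
  fix r c r' c' assume r: "r \<in> T" "r' \<in> T"
    and c: "c \<in> centre G (image_kernel \<phi>)" "c' \<in> centre G (image_kernel \<phi>)"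
    and eq: "twist \<phi> r c = twist \<phi> r' c'"
  have rH: "r \<in> image_kernel \<phi>" "r' \<in> image_kernel \<phi>" using r T by auto
  have "inv r' \<otimes> r \<in> centre G (image_kernel \<phi>)" using twist_eq_imp_centre[OF hom rH eq] .
  moreover have "r \<otimes> \<one> = r' \<otimes> (inv r' \<otimes> r)" using rH by (simp add: G.m_assoc[symmetric])
  ultimately have "(r, \<one>) = (r', inv r' \<otimes> r)"
    using inj_onD[OF inj_T, of "(r, \<one>)" "(r', inv r' \<otimes> r)"] r Z.one_closed by simp
  then have "r = r'" by simp
  moreover from this have "c = c'"
    using twist_eq_imp_eq[OF hom H.mem_carrier[OF rH(1)] Z.mem_carrier[OF c(1)]
        Z.mem_carrier[OF c(2)]] eq by simp
  ultimately show "r = r' \<and> c = c'" ..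
qed

lemma twist_bij_betw_class:
  assumes \<phi>: "\<phi> \<in> surj_homs F G" and T: "T \<subseteq> image_kernel \<phi>"
    and bij_T: "bij_betw (\<lambda>(r, z). r \<otimes> z) (T \<times> centre G (image_kernel \<phi>)) (image_kernel \<phi>)"
  shows "bij_betw (\<lambda>(r, c). twist \<phi> r c) (T \<times> centre G (image_kernel \<phi>)) (twist_rel `` {\<phi>})"
  unfolding bij_betw_def
proof
  show "inj_on (\<lambda>(r, c). twist \<phi> r c) (T \<times> centre G (image_kernel \<phi>))"
    using twist_inj_on_transversal[OF surj_homsD(2)[OF \<phi>] T bij_betw_imp_inj_on[OF bij_T]] .
  show "(\<lambda>(r, c). twist \<phi> r c) ` (T \<times> centre G (image_kernel \<phi>)) = twist_rel `` {\<phi>}"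
    unfolding twist_rel_class[OF \<phi>]
  proof
    show "(\<lambda>(r, c). twist \<phi> r c) ` (T \<times> centre G (image_kernel \<phi>)) \<subseteq>
      (\<lambda>(r, c). twist \<phi> r c) ` (image_kernel \<phi> \<times> centre G (image_kernel \<phi>))"
      using T by (intro image_mono) auto
    show "(\<lambda>(r, c). twist \<phi> r c) ` (image_kernel \<phi> \<times> centre G (image_kernel \<phi>)) \<subseteq>
      (\<lambda>(r, c). twist \<phi> r c) ` (T \<times> centre G (image_kernel \<phi>))"
    proof clarify
      fix r c assume r: "r \<in> image_kernel \<phi>" and c: "c \<in> centre G (image_kernel \<phi>)"
      have "r \<in> (\<lambda>(r, z). r \<otimes> z) ` (T \<times> centre G (image_kernel \<phi>))"
        unfolding bij_betw_imp_surj_on[OF bij_T] by (rule r)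
      then obtain r0 z where r0: "r0 \<in> T" and z: "z \<in> centre G (image_kernel \<phi>)"
        and r_eq: "r = r0 \<otimes> z" by auto
      note twist_r0 = twist_mult_centre[OF surj_homsD(1)[OF \<phi>] subsetD[OF T r0] z c]
      then have "twist \<phi> r c = twist \<phi> r0 (inv (\<phi> t) \<otimes> z \<otimes> \<phi> t \<otimes> c \<otimes> inv z)"
        using r_eq by simp
      then show "twist \<phi> r c \<in> (\<lambda>(r, c). twist \<phi> r c) ` (T \<times> centre G (image_kernel \<phi>))"
        using r0 twist_r0(2)
        by (intro image_eqI[of _ _ "(r0, inv (\<phi> t) \<otimes> z \<otimes> \<phi> t \<otimes> c \<otimes> inv z)"]) simp_all
    qed
  qed
qed

lemma twist_rel_class_eqpoll:
  assumes \<phi>: "\<phi> \<in> surj_homs F G"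
  obtains Y :: "'b set" where "twist_rel `` {\<phi>} \<approx> derived G (carrier G) \<times> Y"
proof -
  interpret H: subgroup "image_kernel \<phi>" G using image_kernel_subgroup[OF surj_homsD(2)[OF \<phi>]] .
  obtain T where T: "T \<subseteq> image_kernel \<phi>"
    and bij_T: "bij_betw (\<lambda>(r, z). r \<otimes> z) (T \<times> centre G (image_kernel \<phi>)) (image_kernel \<phi>)"
    using G.subgroup_transversal[OF H.subgroup_axioms G.subgroup_centre[OF H.subgroup_axioms]
        centre_subset] by blast
  obtain T' where bij_T': "bij_betw (\<lambda>(r, d). r \<otimes> d) (T' \<times> derived G (carrier G)) (image_kernel \<phi>)"
    using G.subgroup_transversal[OF H.subgroup_axioms G.derived_is_subgroup
        derived_subset_image_kernel[OF surj_homsD(1)[OF \<phi>]]] by blast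
  have class_eqpoll: "T \<times> centre G (image_kernel \<phi>) \<approx> twist_rel `` {\<phi>}"
    unfolding eqpoll_def using twist_bij_betw_class[OF \<phi> T bij_T] by blast
  have H_eqpoll: "T' \<times> derived G (carrier G) \<approx> image_kernel \<phi>"
    unfolding eqpoll_def using bij_T' by blast
  have "twist_rel `` {\<phi>} \<approx> T \<times> centre G (image_kernel \<phi>)" using class_eqpoll by (rule eqpoll_sym)
  also have "\<dots> \<approx> image_kernel \<phi>" unfolding eqpoll_def using bij_T by blast
  also have "\<dots> \<approx> T' \<times> derived G (carrier G)" using H_eqpoll by (rule eqpoll_sym)
  also have "\<dots> \<approx> derived G (carrier G) \<times> T'" by (rule times_commute_eqpoll)
  finally show thesis by (rule that)
qed

theorem card_dvd_derived_surj_homs: "card_dvd (derived G (carrier G)) (surj_homs F G)"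
proof -
  have "\<exists>Y :: (('a \<Rightarrow> 'b) set \<times> 'b) set. surj_homs F G \<approx> derived G (carrier G) \<times> Y"
  proof (rule eqpoll_times_if_classes_eqpoll_times[OF twist_rel_equiv])
    fix Q assume "Q \<in> surj_homs F G // twist_rel"
    then obtain \<phi> where "\<phi> \<in> surj_homs F G" "Q = twist_rel `` {\<phi>}" by (rule quotientE)
    then show "\<exists>Y :: 'b set. Q \<approx> derived G (carrier G) \<times> Y"
      using twist_rel_class_eqpoll by metis
  qed
  moreover have "derived G (carrier G) \<noteq> {}"
    using subgroup.one_closed[OF G.derived_is_subgroup] by blast
  ultimately show ?thesis using card_dvdI by blast
qed

end

theorem mainTheorem4:
  fixes F :: "('a, 'c) monoid_scheme" and G :: "('b, 'd) monoid_scheme"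
  assumes "group F" and "group G"
    and "finitely_generated_group F"
    and "infinite (rcosets\<^bsub>F\<^esub> (derived F (carrier F)))"
  shows "card_dvd (derived G (carrier G)) (surj_homs F G)"
proof -
  interpret F: group F by (rule assms(1))
  obtain f x where "f \<in> hom F integer_group" "x \<in> carrier F" "f x \<noteq> 0"
    using F.nonzero_hom_integer_group_if_infinite_abelianization[OF assms(3,4)] .
  then obtain \<chi> t where "\<chi> \<in> hom F integer_group" "t \<in> carrier F" "\<chi> t = 1"
    by (rule F.hom_integer_group_value_one)
  then interpret hom_onto_integers F G \<chi> t
    using assms(1,2) by (simp add: hom_onto_integers_def hom_onto_integers_axioms_def)
  show ?thesis by (rule card_dvd_derived_surj_homs)
qed

end
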